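(* Let $\mathcal{R}=(\mathcal{X},(\mathcal{M},\mathcal{I}))$ be a reflexive graph category with isomorphisms that has terminal objects stable under face maps and degeneracies. Then for each natural number $n$, the category $\mathcal{M}^n\to\mathcal{M}$ has a terminal object.
   Context: Fix a locally small category $\mathcal{C}$ with finite products; all categories, functors and natural transformations below are internal to $\mathcal{C}$ (objects of objects $C_0$, of morphisms $C_1$, source/target $\mathsf{s}_C,\mathsf{t}_C$, identities $\mathsf{id}_C$, composition $\circ_C$ on generalized morphisms $J\to C_1$, object/morphism parts $F_0,F_1$ of functors). A reflexive graph category $\mathcal{X}$ consists of internal categories $\mathcal{X}(0),\mathcal{X}(1)$, two distinct internal functors $\mathcal{X}(\mathbf{f}_\top),\mathcal{X}(\mathbf{f}_\bot):\mathcal{X}(1)\to\mathcal{X}(0)$ (face maps) and an internal functor $\mathcal{X}(\mathbf{d}):\mathcal{X}(0)\to\mathcal{X}(1)$ (degeneracy) with $\mathcal{X}(\mathbf{f}_\star)\circ\mathcal{X}(\mathbf{d})=\mathsf{id}$; $\mathcal{X}^n$ is the componentwise product. A reflexive graph functor $\mathcal{F}:\mathcal{X}\to\mathcal{Y}$ is a pair of internal functors $\mathcal{F}(l):\mathcal{X}(l)\to\mathcal{Y}(l)$; face map-preserving: $\mathcal{Y}(\mathbf{f}_\star)\circ\mathcal{F}(1)=\mathcal{F}(0)\circ\mathcal{X}(\mathbf{f}_\star)$; degeneracy-preserving: equipped with an internal natural isomorphism $\varepsilon_\mathcal{F}:\mathcal{Y}(\mathbf{d})\circ\mathcal{F}(0)\to\mathcal{F}(1)\circ\mathcal{X}(\mathbf{d})$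 with $\mathcal{Y}(\mathbf{f}_\star)_1\circ\varepsilon_\mathcal{F}=\mathsf{id}_{\mathcal{Y}(0)}\circ\mathcal{F}(0)_0$. Reflexive graph natural transformations $\eta:\mathcal{F}\to\mathcal{G}$: pairs of internal natural transformations $\eta(l):\mathcal{F}(l)\to\mathcal{G}(l)$; face map-preserving: $\mathcal{Y}(\mathbf{f}_\star)_1\circ\eta(1)=\eta(0)\circ\mathcal{X}(\mathbf{f}_\star)_0$; degeneracy-preserving: $(\eta(1)\circ\mathcal{X}(\mathbf{d})_0)\circ_{\mathcal{Y}(1)}\varepsilon_\mathcal{F}=\varepsilon_\mathcal{G}\circ_{\mathcal{Y}(1)}(\mathcal{Y}(\mathbf{d})_1\circ\eta(0))$. Composition $(\mathcal{G}\circ\mathcal{F})(l)=\mathcal{G}(l)\circ\mathcal{F}(l)$, $\varepsilon_{\mathcal{G}\circ\mathcal{F}}=(\mathcal{G}(1)_1\circ\varepsilon_\mathcal{F})\circ(\varepsilon_\mathcal{G}\circ\mathcal{F}(0)_0)$. A reflexive graph category with isomorphisms $\mathcal{R}=(\mathcal{X},(\mathcal{M},\mathcal{I}))$: reflexive graph categories $\mathcal{X},\mathcal{M}$ and a reflexive graph functor $\mathcal{I}:\mathcal{M}\to\mathcal{X}$ with $\mathcal{I}(l)_0$ iso, $\mathcal{I}(l)_1$ monic, $\mathcal{I}(0)\circ\mathcal{M}(\mathbf{f}_\star)=\mathcal{X}(\mathbf{f}_\star)\circ\mathcal{I}(1)$, $\mathcal{I}(1)\circ\mathcal{M}(\mathbf{d})=\mathcal{X}(\mathbf{d})\circ\mathcal{I}(0)$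 (so $\varepsilon_\mathcal{I}$ is an identity), and every morphism of $\mathcal{M}(l)$ an isomorphism; $\mathcal{M}(l)$ is regarded as a wide subcategory of $\mathcal{X}(l)$ and a morphism of $\mathcal{X}(l)$ "lies in $\mathcal{M}(l)$" if it is in the image of $\mathcal{I}(l)_1$. The category $\mathcal{M}^n\to\mathcal{M}$ has as objects the face map- and degeneracy-preserving reflexive graph functors $\mathcal{M}^n\to\mathcal{M}$ and as morphisms $\mathcal{F}\to\mathcal{G}$ the face map- and degeneracy-preserving reflexive graph natural transformations $\mathcal{I}\circ\mathcal{F}\to\mathcal{I}\circ\mathcal{G}$, with componentwise identities and composition. An internal category $C$ has a terminal object if it is equipped with $1_C:1\to C_0$ such that for every generalized object $a:J\to C_0$ there is a unique $!_C(a):J\to C_1$ with source $a$ and target $1_C\circ !_J$. $\mathcal{R}$ has terminal objects stable under face maps and degeneracies if $\mathcal{X}(0)$ and $\mathcal{X}(1)$ have terminal objects, $\mathcal{X}(\mathbf{f}_\star)_0\circ 1_{\mathcal{X}(1)}=1_{\mathcal{X}(0)}$ for both $\star$ (the canonical comparison morphism being the identity), and the canonical morphism $\eta^1_\mathcal{X}:\mathcal{X}(\mathbf{d})_0\circ 1_{\mathcal{X}(0)}\to 1_{\mathcal{X}(1)}$ in $\mathcal{X}(1)$ is an isomorphism lying in $\mathcal{M}(1)$. *)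

theory Defs
  imports Main
begin

record ('o,'m) cat =
  obj  :: "'o set"
  arr  :: "'m set"
  dm   :: "'m \<Rightarrow> 'o"
  cd   :: "'m \<Rightarrow> 'o"
  idt  :: "'o \<Rightarrow> 'm"
  cmp  :: "'m \<Rightarrow> 'm \<Rightarrow> 'm"   (* cmp C g f = g \<circ> f *)

record ('o,'m) pcat = "('o,'m) cat" +
  tm     :: "'o"
  bng    :: "'o \<Rightarrow> 'm"
  pr     :: "'o \<Rightarrow> 'o \<Rightarrow> 'o"
  pj1    :: "'o \<Rightarrow> 'o \<Rightarrow> 'm"
  pj2    :: "'o \<Rightarrow> 'o \<Rightarrow> 'm"
  prpair :: "'m \<Rightarrow> 'm \<Rightarrow> 'm"

definition hom :: "('o,'m) pcat \<Rightarrow> 'o \<Rightarrow> 'o \<Rightarrow> 'm set" where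
  "hom C a b = {f \<in> arr C. dm C f = a \<and> cd C f = b}"

definition category :: "('o,'m) pcat \<Rightarrow> bool" where
  "category C \<longleftrightarrow>
     (\<forall>f\<in>arr C. dm C f \<in> obj C \<and> cd C f \<in> obj C) \<and>
     (\<forall>a\<in>obj C. idt C a \<in> hom C a a) \<and>
     (\<forall>f\<in>arr C. \<forall>g\<in>arr C. cd C f = dm C g \<longrightarrow> cmp C g f \<in> hom C (dm C f) (cd C g)) \<and>
     (\<forall>f\<in>arr C. cmp C f (idt C (dm C f)) = f \<and> cmp C (idt C (cd C f)) f = f) \<and>
     (\<forall>f\<in>arr C. \<forall>g\<in>arr C. \<forall>h\<in>arr C. cd C f = dm C g \<longrightarrow> cd C g = dm C h \<longrightarrow>
        cmp C h (cmp C g f) = cmp C (cmp C h g) f)"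

definition finite_products :: "('o,'m) pcat \<Rightarrow> bool" where
  "finite_products C \<longleftrightarrow>
     tm C \<in> obj C \<and>
     (\<forall>a\<in>obj C. bng C a \<in> hom C a (tm C) \<and> (\<forall>f\<in>hom C a (tm C). f = bng C a)) \<and>
     (\<forall>a\<in>obj C. \<forall>b\<in>obj C.
        pr C a b \<in> obj C \<and> pj1 C a b \<in> hom C (pr C a b) a \<and> pj2 C a b \<in> hom C (pr C a b) b \<and>
        (\<forall>J\<in>obj C. \<forall>f\<in>hom C J a. \<forall>g\<in>hom C J b.
           prpair C f g \<in> hom C J (pr C a b) \<and>
           cmp C (pj1 C a b) (prpair C f g) = f \<and> cmp C (pj2 C a b) (prpair C f g) = g \<and>
           (\<forall>h\<in>hom C J (pr C a b). cmp C (pj1 C a b) h = f \<and> cmp C (pj2 C a b) h = g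
               \<longrightarrow> h = prpair C f g)))"

definition iso_in :: "('o,'m) pcat \<Rightarrow> 'm \<Rightarrow> bool" where
  "iso_in C f \<longleftrightarrow> f \<in> arr C \<and> (\<exists>g\<in>hom C (cd C f) (dm C f).
     cmp C g f = idt C (dm C f) \<and> cmp C f g = idt C (cd C f))"

definition mono_in :: "('o,'m) pcat \<Rightarrow> 'm \<Rightarrow> bool" where
  "mono_in C f \<longleftrightarrow> f \<in> arr C \<and> (\<forall>J\<in>obj C. \<forall>g\<in>hom C J (dm C f). \<forall>h\<in>hom C J (dm C f).
     cmp C f g = cmp C f h \<longrightarrow> g = h)"

(* composition on generalized morphisms: icmp A f g = f \<circ> g  (g first) *)
record ('o,'m) icat =
  C0   :: "'o"
  C1   :: "'o"
  src  :: "'m"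
  tgt  :: "'m"
  iid  :: "'m"
  icmp :: "'m \<Rightarrow> 'm \<Rightarrow> 'm"

definition composable :: "('o,'m) pcat \<Rightarrow> ('o,'m) icat \<Rightarrow> 'o \<Rightarrow> 'm \<Rightarrow> 'm \<Rightarrow> bool" where
  "composable C A J f g \<longleftrightarrow> f \<in> hom C J (C1 A) \<and> g \<in> hom C J (C1 A) \<and>
     cmp C (src A) f = cmp C (tgt A) g"

definition internal_cat :: "('o,'m) pcat \<Rightarrow> ('o,'m) icat \<Rightarrow> bool" where
  "internal_cat C A \<longleftrightarrow>
     C0 A \<in> obj C \<and> C1 A \<in> obj C \<and>
     src A \<in> hom C (C1 A) (C0 A) \<and> tgt A \<in> hom C (C1 A) (C0 A) \<and> iid A \<in> hom C (C0 A) (C1 A) \<and>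
     cmp C (src A) (iid A) = idt C (C0 A) \<and> cmp C (tgt A) (iid A) = idt C (C0 A) \<and>
     (\<forall>J\<in>obj C. \<forall>f g. composable C A J f g \<longrightarrow>
        icmp A f g \<in> hom C J (C1 A) \<and>
        cmp C (src A) (icmp A f g) = cmp C (src A) g \<and>
        cmp C (tgt A) (icmp A f g) = cmp C (tgt A) f \<and>
        (\<forall>K\<in>obj C. \<forall>h\<in>hom C K J. cmp C (icmp A f g) h = icmp A (cmp C f h) (cmp C g h))) \<and>
     (\<forall>J\<in>obj C. \<forall>f\<in>hom C J (C1 A).
        icmp A f (cmp C (iid A) (cmp C (src A) f)) = f \<and>
        icmp A (cmp C (iid A) (cmp C (tgt A) f)) f = f) \<and>
     (\<forall>J\<in>obj C. \<forall>f g h. composable C A J f g \<longrightarrow> composable C A J g h \<longrightarrow>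
        icmp A (icmp A f g) h = icmp A f (icmp A g h))"

record 'm ifun =
  fo :: "'m"
  fa :: "'m"

definition internal_functor :: "('o,'m) pcat \<Rightarrow> ('o,'m) icat \<Rightarrow> ('o,'m) icat \<Rightarrow> 'm ifun \<Rightarrow> bool" where
  "internal_functor C A B F \<longleftrightarrow>
     fo F \<in> hom C (C0 A) (C0 B) \<and> fa F \<in> hom C (C1 A) (C1 B) \<and>
     cmp C (src B) (fa F) = cmp C (fo F) (src A) \<and>
     cmp C (tgt B) (fa F) = cmp C (fo F) (tgt A) \<and>
     cmp C (fa F) (iid A) = cmp C (iid B) (fo F) \<and>
     (\<forall>J\<in>obj C. \<forall>f g. composable C A J f g \<longrightarrow>
        cmp C (fa F) (icmp A f g) = icmp B (cmp C (fa F) f) (cmp C (fa F) g))"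

definition fcomp :: "('o,'m) pcat \<Rightarrow> 'm ifun \<Rightarrow> 'm ifun \<Rightarrow> 'm ifun" where
  "fcomp C G F = \<lparr>fo = cmp C (fo G) (fo F), fa = cmp C (fa G) (fa F)\<rparr>"

definition fid :: "('o,'m) pcat \<Rightarrow> ('o,'m) icat \<Rightarrow> 'm ifun" where
  "fid C A = \<lparr>fo = idt C (C0 A), fa = idt C (C1 A)\<rparr>"

definition internal_nat :: "('o,'m) pcat \<Rightarrow> ('o,'m) icat \<Rightarrow> ('o,'m) icat \<Rightarrow> 'm ifun \<Rightarrow> 'm ifun \<Rightarrow> 'm \<Rightarrow> bool" where
  "internal_nat C A B F G \<eta> \<longleftrightarrow>
     \<eta> \<in> hom C (C0 A) (C1 B) \<and> cmp C (src B) \<eta> = fo F \<and> cmp C (tgt B) \<eta> = fo G \<and>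
     (\<forall>J\<in>obj C. \<forall>f\<in>hom C J (C1 A).
        icmp B (cmp C \<eta> (cmp C (tgt A) f)) (cmp C (fa F) f) =
        icmp B (cmp C (fa G) f) (cmp C \<eta> (cmp C (src A) f)))"

definition internal_nat_iso :: "('o,'m) pcat \<Rightarrow> ('o,'m) icat \<Rightarrow> ('o,'m) icat \<Rightarrow> 'm ifun \<Rightarrow> 'm ifun \<Rightarrow> 'm \<Rightarrow> bool" where
  "internal_nat_iso C A B F G \<eta> \<longleftrightarrow> internal_nat C A B F G \<eta> \<and>
     (\<exists>\<theta>. internal_nat C A B G F \<theta> \<and>
        icmp B \<theta> \<eta> = cmp C (iid B) (fo F) \<and> icmp B \<eta> \<theta> = cmp C (iid B) (fo G))"

definition igroupoid :: "('o,'m) pcat \<Rightarrow> ('o,'m) icat \<Rightarrow> bool" where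
  "igroupoid C A \<longleftrightarrow> (\<forall>J\<in>obj C. \<forall>f\<in>hom C J (C1 A). \<exists>g\<in>hom C J (C1 A).
     cmp C (src A) g = cmp C (tgt A) f \<and> cmp C (tgt A) g = cmp C (src A) f \<and>
     icmp A g f = cmp C (iid A) (cmp C (src A) f) \<and> icmp A f g = cmp C (iid A) (cmp C (tgt A) f))"

definition iiso :: "('o,'m) pcat \<Rightarrow> ('o,'m) icat \<Rightarrow> 'm \<Rightarrow> bool" where
  "iiso C A e \<longleftrightarrow> e \<in> hom C (dm C e) (C1 A) \<and> (\<exists>g\<in>hom C (dm C e) (C1 A).
     cmp C (src A) g = cmp C (tgt A) e \<and> cmp C (tgt A) g = cmp C (src A) e \<and>
     icmp A g e = cmp C (iid A) (cmp C (src A) e) \<and> icmp A e g = cmp C (iid A) (cmp C (tgt A) e))"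

definition iprod :: "('o,'m) pcat \<Rightarrow> ('o,'m) icat \<Rightarrow> ('o,'m) icat \<Rightarrow> ('o,'m) icat" where
  "iprod C A B = \<lparr>C0 = pr C (C0 A) (C0 B), C1 = pr C (C1 A) (C1 B),
     src = prpair C (cmp C (src A) (pj1 C (C1 A) (C1 B))) (cmp C (src B) (pj2 C (C1 A) (C1 B))),
     tgt = prpair C (cmp C (tgt A) (pj1 C (C1 A) (C1 B))) (cmp C (tgt B) (pj2 C (C1 A) (C1 B))),
     iid = prpair C (cmp C (iid A) (pj1 C (C0 A) (C0 B))) (cmp C (iid B) (pj2 C (C0 A) (C0 B))),
     icmp = (\<lambda>f g. prpair C
        (icmp A (cmp C (pj1 C (C1 A) (C1 B)) f) (cmp C (pj1 C (C1 A) (C1 B)) g))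
        (icmp B (cmp C (pj2 C (C1 A) (C1 B)) f) (cmp C (pj2 C (C1 A) (C1 B)) g)))\<rparr>"

definition iterm :: "('o,'m) pcat \<Rightarrow> ('o,'m) icat" where
  "iterm C = \<lparr>C0 = tm C, C1 = tm C, src = idt C (tm C), tgt = idt C (tm C), iid = idt C (tm C),
     icmp = (\<lambda>f g. bng C (dm C f))\<rparr>"

primrec ipow :: "('o,'m) pcat \<Rightarrow> nat \<Rightarrow> ('o,'m) icat \<Rightarrow> ('o,'m) icat" where
  "ipow C 0 A = iterm C"
| "ipow C (Suc n) A = iprod C (ipow C n A) A"

definition fprod :: "('o,'m) pcat \<Rightarrow> ('o,'m) icat \<Rightarrow> ('o,'m) icat \<Rightarrow> 'm ifun \<Rightarrow> 'm ifun \<Rightarrow> 'm ifun" where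
  "fprod C A B F G = \<lparr>fo = prpair C (cmp C (fo F) (pj1 C (C0 A) (C0 B))) (cmp C (fo G) (pj2 C (C0 A) (C0 B))),
     fa = prpair C (cmp C (fa F) (pj1 C (C1 A) (C1 B))) (cmp C (fa G) (pj2 C (C1 A) (C1 B)))\<rparr>"

primrec fpow :: "('o,'m) pcat \<Rightarrow> nat \<Rightarrow> ('o,'m) icat \<Rightarrow> 'm ifun \<Rightarrow> 'm ifun" where
  "fpow C 0 A F = fid C (iterm C)"
| "fpow C (Suc n) A F = fprod C (ipow C n A) A (fpow C n A F) F"

record ('o,'m) rgc =
  X0 :: "('o,'m) icat"
  X1 :: "('o,'m) icat"
  fT :: "'m ifun"
  fB :: "'m ifun"
  dg :: "'m ifun"

definition reflexive_graph_cat :: "('o,'m) pcat \<Rightarrow> ('o,'m) rgc \<Rightarrow> bool" where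
  "reflexive_graph_cat C X \<longleftrightarrow>
     internal_cat C (X0 X) \<and> internal_cat C (X1 X) \<and>
     internal_functor C (X1 X) (X0 X) (fT X) \<and> internal_functor C (X1 X) (X0 X) (fB X) \<and>
     fT X \<noteq> fB X \<and>
     internal_functor C (X0 X) (X1 X) (dg X) \<and>
     fcomp C (fT X) (dg X) = fid C (X0 X) \<and> fcomp C (fB X) (dg X) = fid C (X0 X)"

definition rgpow :: "('o,'m) pcat \<Rightarrow> nat \<Rightarrow> ('o,'m) rgc \<Rightarrow> ('o,'m) rgc" where
  "rgpow C n X = \<lparr>X0 = ipow C n (X0 X), X1 = ipow C n (X1 X),
     fT = fpow C n (X1 X) (fT X), fB = fpow C n (X1 X) (fB X), dg = fpow C n (X0 X) (dg X)\<rparr>"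

record 'm rgf =
  F0  :: "'m ifun"
  F1  :: "'m ifun"
  eps :: "'m"

definition rg_functor :: "('o,'m) pcat \<Rightarrow> ('o,'m) rgc \<Rightarrow> ('o,'m) rgc \<Rightarrow> 'm rgf \<Rightarrow> bool" where
  "rg_functor C X Y F \<longleftrightarrow>
     internal_functor C (X0 X) (X0 Y) (F0 F) \<and> internal_functor C (X1 X) (X1 Y) (F1 F)"

definition face_pres :: "('o,'m) pcat \<Rightarrow> ('o,'m) rgc \<Rightarrow> ('o,'m) rgc \<Rightarrow> 'm rgf \<Rightarrow> bool" where
  "face_pres C X Y F \<longleftrightarrow>
     fcomp C (fT Y) (F1 F) = fcomp C (F0 F) (fT X) \<and>
     fcomp C (fB Y) (F1 F) = fcomp C (F0 F) (fB X)"

definition deg_pres :: "('o,'m) pcat \<Rightarrow> ('o,'m) rgc \<Rightarrow> ('o,'m) rgc \<Rightarrow> 'm rgf \<Rightarrow> bool" where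
  "deg_pres C X Y F \<longleftrightarrow>
     internal_nat_iso C (X0 X) (X1 Y) (fcomp C (dg Y) (F0 F)) (fcomp C (F1 F) (dg X)) (eps F) \<and>
     cmp C (fa (fT Y)) (eps F) = cmp C (iid (X0 Y)) (fo (F0 F)) \<and>
     cmp C (fa (fB Y)) (eps F) = cmp C (iid (X0 Y)) (fo (F0 F))"

(* composite G \<circ> F, where Z is the codomain of G *)
definition rgf_comp :: "('o,'m) pcat \<Rightarrow> ('o,'m) rgc \<Rightarrow> 'm rgf \<Rightarrow> 'm rgf \<Rightarrow> 'm rgf" where
  "rgf_comp C Z G F = \<lparr>F0 = fcomp C (F0 G) (F0 F), F1 = fcomp C (F1 G) (F1 F),
     eps = icmp (X1 Z) (cmp C (fa (F1 G)) (eps F)) (cmp C (eps G) (fo (F0 F)))\<rparr>"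

record 'm rgn =
  N0 :: "'m"
  N1 :: "'m"

definition rg_nat :: "('o,'m) pcat \<Rightarrow> ('o,'m) rgc \<Rightarrow> ('o,'m) rgc \<Rightarrow> 'm rgf \<Rightarrow> 'm rgf \<Rightarrow> 'm rgn \<Rightarrow> bool" where
  "rg_nat C X Y F G \<eta> \<longleftrightarrow>
     internal_nat C (X0 X) (X0 Y) (F0 F) (F0 G) (N0 \<eta>) \<and>
     internal_nat C (X1 X) (X1 Y) (F1 F) (F1 G) (N1 \<eta>)"

definition rgn_face_pres :: "('o,'m) pcat \<Rightarrow> ('o,'m) rgc \<Rightarrow> ('o,'m) rgc \<Rightarrow> 'm rgn \<Rightarrow> bool" where
  "rgn_face_pres C X Y \<eta> \<longleftrightarrow>
     cmp C (fa (fT Y)) (N1 \<eta>) = cmp C (N0 \<eta>) (fo (fT X)) \<and>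
     cmp C (fa (fB Y)) (N1 \<eta>) = cmp C (N0 \<eta>) (fo (fB X))"

definition rgn_deg_pres :: "('o,'m) pcat \<Rightarrow> ('o,'m) rgc \<Rightarrow> ('o,'m) rgc \<Rightarrow> 'm rgf \<Rightarrow> 'm rgf \<Rightarrow> 'm rgn \<Rightarrow> bool" where
  "rgn_deg_pres C X Y F G \<eta> \<longleftrightarrow>
     icmp (X1 Y) (cmp C (N1 \<eta>) (fo (dg X))) (eps F) =
     icmp (X1 Y) (eps G) (cmp C (fa (dg Y)) (N0 \<eta>))"

definition rgc_iso :: "('o,'m) pcat \<Rightarrow> ('o,'m) rgc \<Rightarrow> ('o,'m) rgc \<Rightarrow> 'm rgf \<Rightarrow> bool" where
  "rgc_iso C X M I \<longleftrightarrow>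
     reflexive_graph_cat C X \<and> reflexive_graph_cat C M \<and> rg_functor C M X I \<and>
     iso_in C (fo (F0 I)) \<and> iso_in C (fo (F1 I)) \<and>
     mono_in C (fa (F0 I)) \<and> mono_in C (fa (F1 I)) \<and>
     fcomp C (F0 I) (fT M) = fcomp C (fT X) (F1 I) \<and>
     fcomp C (F0 I) (fB M) = fcomp C (fB X) (F1 I) \<and>
     fcomp C (F1 I) (dg M) = fcomp C (dg X) (F0 I) \<and>
     eps I = cmp C (iid (X1 X)) (cmp C (fo (dg X)) (fo (F0 I))) \<and>
     deg_pres C M X I \<and>
     igroupoid C (X0 M) \<and> igroupoid C (X1 M)"

definition iterminal :: "('o,'m) pcat \<Rightarrow> ('o,'m) icat \<Rightarrow> 'm \<Rightarrow> bool" where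
  "iterminal C A t \<longleftrightarrow> t \<in> hom C (tm C) (C0 A) \<and>
     (\<forall>J\<in>obj C. \<forall>a\<in>hom C J (C0 A). \<exists>!m. m \<in> hom C J (C1 A) \<and>
        cmp C (src A) m = a \<and> cmp C (tgt A) m = cmp C t (bng C J))"

definition ibang :: "('o,'m) pcat \<Rightarrow> ('o,'m) icat \<Rightarrow> 'm \<Rightarrow> 'm \<Rightarrow> 'm" where
  "ibang C A t a = (THE m. m \<in> hom C (dm C a) (C1 A) \<and>
        cmp C (src A) m = a \<and> cmp C (tgt A) m = cmp C t (bng C (dm C a)))"

definition terminal_stable :: "('o,'m) pcat \<Rightarrow> ('o,'m) rgc \<Rightarrow> ('o,'m) rgc \<Rightarrow> 'm rgf \<Rightarrow> bool" where
  "terminal_stable C X M I \<longleftrightarrow> (\<exists>t0 t1.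
     iterminal C (X0 X) t0 \<and> iterminal C (X1 X) t1 \<and>
     cmp C (fo (fT X)) t1 = t0 \<and> cmp C (fo (fB X)) t1 = t0 \<and>
     ibang C (X0 X) t0 (cmp C (fo (fT X)) t1) = cmp C (iid (X0 X)) t0 \<and>
     ibang C (X0 X) t0 (cmp C (fo (fB X)) t1) = cmp C (iid (X0 X)) t0 \<and>
     iiso C (X1 X) (ibang C (X1 X) t1 (cmp C (fo (dg X)) t0)) \<and>
     (\<exists>m\<in>hom C (tm C) (C1 (X1 M)). cmp C (fa (F1 I)) m = ibang C (X1 X) t1 (cmp C (fo (dg X)) t0)))"

definition MnM_obj :: "('o,'m) pcat \<Rightarrow> ('o,'m) rgc \<Rightarrow> nat \<Rightarrow> 'm rgf \<Rightarrow> bool" where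
  "MnM_obj C M n F \<longleftrightarrow> rg_functor C (rgpow C n M) M F \<and>
     face_pres C (rgpow C n M) M F \<and> deg_pres C (rgpow C n M) M F"

definition MnM_hom :: "('o,'m) pcat \<Rightarrow> ('o,'m) rgc \<Rightarrow> ('o,'m) rgc \<Rightarrow> 'm rgf \<Rightarrow> nat \<Rightarrow> 'm rgf \<Rightarrow> 'm rgf \<Rightarrow> 'm rgn \<Rightarrow> bool" where
  "MnM_hom C X M I n F G \<eta> \<longleftrightarrow>
     rg_nat C (rgpow C n M) X (rgf_comp C X I F) (rgf_comp C X I G) \<eta> \<and>
     rgn_face_pres C (rgpow C n M) X \<eta> \<and>
     rgn_deg_pres C (rgpow C n M) X (rgf_comp C X I F) (rgf_comp C X I G) \<eta>"

end

(*
  The terminal object T of M^n -> M is constant at objects of M lying over the terminal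
  objects of X. At level 1 it is the target u1 of a lift eta1 to M(1) of the canonical
  isomorphism eta^1 : d(1) -> 1 of X(1); at level 0 it is u0 = f(u1), which lies over 1
  because the face maps preserve terminal objects. The degeneracy comparison of T is eta1
  itself, invertible because M(1) is a groupoid.

  For any F, a morphism I F -> I T is a pair of internal natural transformations into
  functors constant at terminal objects of X(0) and X(1), so each component is forced to be
  the unique arrow into the terminal object. Conversely these unique arrows are natural, and
  the face and degeneracy conditions on them are equations between arrows into a terminal
  object, hence hold automatically.
*)

theory Submission
  imports Defs
begin

lemma hom_iff: "f \<in> hom C a b \<longleftrightarrow> f \<in> arr C \<and> dm C f = a \<and> cd C f = b"
  by (simp add: hom_def)

locale cartesian_category =
  fixes C :: "('o,'m) pcat"
  assumes category: "category C" and finite_products: "finite_products C"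
begin

lemma dm_obj [simp]: "f \<in> arr C \<Longrightarrow> dm C f \<in> obj C"
  and cd_obj [simp]: "f \<in> arr C \<Longrightarrow> cd C f \<in> obj C"
  using category unfolding category_def by blast+

lemma cmp_hom: "f \<in> arr C \<Longrightarrow> g \<in> arr C \<Longrightarrow> cd C f = dm C g \<Longrightarrow> cmp C g f \<in> hom C (dm C f) (cd C g)"
  using category unfolding category_def by blast

lemma cmp_arr [simp]: "f \<in> arr C \<Longrightarrow> g \<in> arr C \<Longrightarrow> cd C f = dm C g \<Longrightarrow> cmp C g f \<in> arr C"
  and dm_cmp [simp]: "f \<in> arr C \<Longrightarrow> g \<in> arr C \<Longrightarrow> cd C f = dm C g \<Longrightarrow> dm C (cmp C g f) = dm C f"
  and cd_cmp [simp]: "f \<in> arr C \<Longrightarrow> g \<in> arr C \<Longrightarrow> cd C f = dm C g \<Longrightarrow> cd C (cmp C g f) = cd C g"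
  using cmp_hom by (simp_all add: hom_iff)

lemma cmp_assoc [simp]:
  "f \<in> arr C \<Longrightarrow> g \<in> arr C \<Longrightarrow> h \<in> arr C \<Longrightarrow> cd C f = dm C g \<Longrightarrow> cd C g = dm C h \<Longrightarrow>
   cmp C (cmp C h g) f = cmp C h (cmp C g f)"
  using category unfolding category_def by metis

text \<open>The simplifier keeps composites right-associated (\<open>cmp_assoc\<close>), so equations between
  composites are also needed in the form precomposed with an arbitrary \<open>x\<close>.\<close>

lemma cmp_reduce:
  "cmp C g f = h \<Longrightarrow> f \<in> arr C \<Longrightarrow> g \<in> arr C \<Longrightarrow> cd C f = dm C g \<Longrightarrow>
   x \<in> arr C \<Longrightarrow> cd C x = dm C f \<Longrightarrow> cmp C g (cmp C f x) = cmp C h x"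
  by (simp flip: cmp_assoc)

lemma idt_arr [simp]: "a \<in> obj C \<Longrightarrow> idt C a \<in> arr C"
  and dm_idt [simp]: "a \<in> obj C \<Longrightarrow> dm C (idt C a) = a"
  and cd_idt [simp]: "a \<in> obj C \<Longrightarrow> cd C (idt C a) = a"
  using category unfolding category_def by (auto simp: hom_iff)

lemma cmp_idt_left [simp]: "f \<in> arr C \<Longrightarrow> cd C f = a \<Longrightarrow> cmp C (idt C a) f = f"
  and cmp_idt_right [simp]: "f \<in> arr C \<Longrightarrow> dm C f = a \<Longrightarrow> cmp C f (idt C a) = f"
  using category unfolding category_def by blast+

lemma tm_obj [simp]: "tm C \<in> obj C"
  using finite_products unfolding finite_products_def by blast

lemma bng_arr [simp]: "a \<in> obj C \<Longrightarrow> bng C a \<in> arr C"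
  and dm_bng [simp]: "a \<in> obj C \<Longrightarrow> dm C (bng C a) = a"
  and cd_bng [simp]: "a \<in> obj C \<Longrightarrow> cd C (bng C a) = tm C"
  using finite_products unfolding finite_products_def hom_iff by blast+

lemma bng_unique:
  assumes "f \<in> arr C" "cd C f = tm C"
  shows "f = bng C (dm C f)"
proof -
  have "f \<in> hom C (dm C f) (tm C)" using assms by (simp add: hom_iff)
  then show ?thesis using finite_products dm_obj[OF assms(1)] unfolding finite_products_def by blast
qed

lemma bng_cmp [simp]: "f \<in> arr C \<Longrightarrow> cd C f = a \<Longrightarrow> cmp C (bng C a) f = bng C (dm C f)"
  by (subst bng_unique[of "cmp C (bng C a) f"]) auto

lemma bng_tm [simp]: "bng C (tm C) = idt C (tm C)"
  using bng_unique[of "idt C (tm C)"] by simp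

lemma pr_obj [simp]: "a \<in> obj C \<Longrightarrow> b \<in> obj C \<Longrightarrow> pr C a b \<in> obj C"
  using finite_products unfolding finite_products_def by blast

lemma pj1 [simp]: "a \<in> obj C \<Longrightarrow> b \<in> obj C \<Longrightarrow> pj1 C a b \<in> arr C"
   "a \<in> obj C \<Longrightarrow> b \<in> obj C \<Longrightarrow> dm C (pj1 C a b) = pr C a b"
   "a \<in> obj C \<Longrightarrow> b \<in> obj C \<Longrightarrow> cd C (pj1 C a b) = a"
  and pj2 [simp]: "a \<in> obj C \<Longrightarrow> b \<in> obj C \<Longrightarrow> pj2 C a b \<in> arr C"
   "a \<in> obj C \<Longrightarrow> b \<in> obj C \<Longrightarrow> dm C (pj2 C a b) = pr C a b"
   "a \<in> obj C \<Longrightarrow> b \<in> obj C \<Longrightarrow> cd C (pj2 C a b) = b"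
  using finite_products unfolding finite_products_def hom_iff by blast+

lemma prpair_hom:
  assumes "f \<in> arr C" "g \<in> arr C" "dm C g = dm C f"
  shows "prpair C f g \<in> hom C (dm C f) (pr C (cd C f) (cd C g)) \<and>
    cmp C (pj1 C (cd C f) (cd C g)) (prpair C f g) = f \<and> cmp C (pj2 C (cd C f) (cd C g)) (prpair C f g) = g"
proof -
  have "f \<in> hom C (dm C f) (cd C f)" "g \<in> hom C (dm C f) (cd C g)"
    using assms by (auto simp add: hom_iff)
  then show ?thesis
    using finite_products assms unfolding finite_products_def by (meson cd_obj dm_obj)
qed

lemma prpair [simp]:
  "f \<in> arr C \<Longrightarrow> g \<in> arr C \<Longrightarrow> dm C g = dm C f \<Longrightarrow> prpair C f g \<in> arr C"
  "f \<in> arr C \<Longrightarrow> g \<in> arr C \<Longrightarrow> dm C g = dm C f \<Longrightarrow> dm C (prpair C f g) = dm C f"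
  "f \<in> arr C \<Longrightarrow> g \<in> arr C \<Longrightarrow> dm C g = dm C f \<Longrightarrow> cd C (prpair C f g) = pr C (cd C f) (cd C g)"
  using prpair_hom by (auto simp: hom_iff)

lemma pj_prpair [simp]:
  "f \<in> arr C \<Longrightarrow> g \<in> arr C \<Longrightarrow> dm C g = dm C f \<Longrightarrow> cd C f = a \<Longrightarrow> cd C g = b \<Longrightarrow>
   cmp C (pj1 C a b) (prpair C f g) = f"
  "f \<in> arr C \<Longrightarrow> g \<in> arr C \<Longrightarrow> dm C g = dm C f \<Longrightarrow> cd C f = a \<Longrightarrow> cd C g = b \<Longrightarrow>
   cmp C (pj2 C a b) (prpair C f g) = g"
  using prpair_hom by auto

lemma pj_prpair_cmp [simp]:
  "f \<in> arr C \<Longrightarrow> g \<in> arr C \<Longrightarrow> x \<in> arr C \<Longrightarrow> dm C g = dm C f \<Longrightarrow> cd C x = dm C f \<Longrightarrow>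
   cd C f = a \<Longrightarrow> cd C g = b \<Longrightarrow> cmp C (pj1 C a b) (cmp C (prpair C f g) x) = cmp C f x"
  "f \<in> arr C \<Longrightarrow> g \<in> arr C \<Longrightarrow> x \<in> arr C \<Longrightarrow> dm C g = dm C f \<Longrightarrow> cd C x = dm C f \<Longrightarrow>
   cd C f = a \<Longrightarrow> cd C g = b \<Longrightarrow> cmp C (pj2 C a b) (cmp C (prpair C f g) x) = cmp C g x"
  by (metis cmp_assoc prpair pj_prpair pj1 pj2 cd_obj)+

lemma mono_in_cancel:
  assumes "mono_in C f" "g \<in> arr C" "h \<in> arr C" "cd C g = dm C f" "cd C h = dm C f"
    "dm C h = dm C g" "cmp C f g = cmp C f h"
  shows "g = h"
proof -
  have "g \<in> hom C (dm C g) (dm C f)" "h \<in> hom C (dm C g) (dm C f)"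
    using assms by (auto simp: hom_iff)
  then show ?thesis
    using assms dm_obj[of g] unfolding mono_in_def by blast
qed

lemma iso_in_cancel:
  assumes f: "iso_in C f" and gh: "g \<in> arr C" "h \<in> arr C" "cd C g = dm C f" "cd C h = dm C f"
    and eq: "cmp C f g = cmp C f h"
  shows "g = h"
proof -
  obtain k where k: "k \<in> arr C" "dm C k = cd C f" "cd C k = dm C f" "cmp C k f = idt C (dm C f)"
    using f unfolding iso_in_def by (auto simp: hom_iff)
  have "f \<in> arr C" using f unfolding iso_in_def by blast
  then have "cmp C k (cmp C f x) = x" if "x \<in> arr C" "cd C x = dm C f" for x
    using k that by (simp flip: cmp_assoc)
  then have "g = cmp C k (cmp C f g)" "h = cmp C k (cmp C f h)"
    using gh by auto
  then show ?thesis using eq by simp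
qed

end

section \<open>Internal categories and functors\<close>

text \<open>The typing part of \<^const>\<open>internal_cat\<close>. It is all we prove about the powers
  \<^const>\<open>ipow\<close>, and all the lemmas below require of the domain of an internal functor.\<close>

definition icat_typed :: "('o,'m) pcat \<Rightarrow> ('o,'m) icat \<Rightarrow> bool" where
  "icat_typed C A \<longleftrightarrow> C0 A \<in> obj C \<and> C1 A \<in> obj C \<and> src A \<in> hom C (C1 A) (C0 A) \<and>
     tgt A \<in> hom C (C1 A) (C0 A) \<and> iid A \<in> hom C (C0 A) (C1 A) \<and>
     (\<forall>J\<in>obj C. \<forall>f g. composable C A J f g \<longrightarrow> icmp A f g \<in> hom C J (C1 A))"

definition ifun_typed :: "('o,'m) pcat \<Rightarrow> ('o,'m) icat \<Rightarrow> ('o,'m) icat \<Rightarrow> 'm ifun \<Rightarrow> bool" where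
  "ifun_typed C A B F \<longleftrightarrow> fo F \<in> hom C (C0 A) (C0 B) \<and> fa F \<in> hom C (C1 A) (C1 B)"

definition const_ifun :: "('o,'m) pcat \<Rightarrow> ('o,'m) icat \<Rightarrow> ('o,'m) icat \<Rightarrow> 'm \<Rightarrow> 'm ifun" where
  "const_ifun C A B u = \<lparr>fo = cmp C u (bng C (C0 A)), fa = cmp C (iid B) (cmp C u (bng C (C1 A)))\<rparr>"

lemma fo_fcomp [simp]: "fo (fcomp C G F) = cmp C (fo G) (fo F)"
  and fa_fcomp [simp]: "fa (fcomp C G F) = cmp C (fa G) (fa F)"
  by (simp_all add: fcomp_def)

context cartesian_category
begin

lemma icat_typed_simps [simp]:
  "icat_typed C A \<Longrightarrow> C0 A \<in> obj C" "icat_typed C A \<Longrightarrow> C1 A \<in> obj C"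
  "icat_typed C A \<Longrightarrow> src A \<in> arr C" "icat_typed C A \<Longrightarrow> dm C (src A) = C1 A"
  "icat_typed C A \<Longrightarrow> cd C (src A) = C0 A"
  "icat_typed C A \<Longrightarrow> tgt A \<in> arr C" "icat_typed C A \<Longrightarrow> dm C (tgt A) = C1 A"
  "icat_typed C A \<Longrightarrow> cd C (tgt A) = C0 A"
  "icat_typed C A \<Longrightarrow> iid A \<in> arr C" "icat_typed C A \<Longrightarrow> dm C (iid A) = C0 A"
  "icat_typed C A \<Longrightarrow> cd C (iid A) = C1 A"
  unfolding icat_typed_def hom_iff by auto

lemma icat_typed_icmp:
  "icat_typed C A \<Longrightarrow> f \<in> arr C \<Longrightarrow> g \<in> arr C \<Longrightarrow> cd C f = C1 A \<Longrightarrow> cd C g = C1 A \<Longrightarrow>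
   dm C g = dm C f \<Longrightarrow> cmp C (src A) f = cmp C (tgt A) g \<Longrightarrow> icmp A f g \<in> hom C (dm C f) (C1 A)"
  unfolding icat_typed_def composable_def hom_iff by (metis dm_obj)

lemma internal_cat_typed: "internal_cat C A \<Longrightarrow> icat_typed C A"
  unfolding internal_cat_def icat_typed_def by blast

lemma iterm_typed: "icat_typed C (iterm C)"
  unfolding icat_typed_def iterm_def composable_def by (auto simp: hom_iff)

lemma iprod_typed:
  assumes A: "icat_typed C A" and B: "icat_typed C B"
  shows "icat_typed C (iprod C A B)"
  unfolding icat_typed_def
proof (intro conjI ballI allI impI)
  let ?P = "iprod C A B"
  let ?p1 = "pj1 C (C1 A) (C1 B)" and ?p2 = "pj2 C (C1 A) (C1 B)"
  let ?q1 = "pj1 C (C0 A) (C0 B)" and ?q2 = "pj2 C (C0 A) (C0 B)"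
  fix J f g assume "J \<in> obj C" and fg: "composable C ?P J f g"
  then have f: "f \<in> arr C" "dm C f = J" "cd C f = pr C (C1 A) (C1 B)"
    and g: "g \<in> arr C" "dm C g = J" "cd C g = pr C (C1 A) (C1 B)"
    and e: "cmp C (src ?P) f = cmp C (tgt ?P) g"
    unfolding composable_def hom_iff by (auto simp: iprod_def)
  have "cmp C ?q1 (cmp C (src ?P) f) = cmp C ?q1 (cmp C (tgt ?P) g)"
    and "cmp C ?q2 (cmp C (src ?P) f) = cmp C ?q2 (cmp C (tgt ?P) g)"
    using e by simp_all
  then have "cmp C (src A) (cmp C ?p1 f) = cmp C (tgt A) (cmp C ?p1 g)"
    and "cmp C (src B) (cmp C ?p2 f) = cmp C (tgt B) (cmp C ?p2 g)"
    using A B f g by (simp_all add: iprod_def)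
  then have "icmp A (cmp C ?p1 f) (cmp C ?p1 g) \<in> hom C J (C1 A)"
    and "icmp B (cmp C ?p2 f) (cmp C ?p2 g) \<in> hom C J (C1 B)"
    using icat_typed_icmp[OF A, of "cmp C ?p1 f" "cmp C ?p1 g"]
      icat_typed_icmp[OF B, of "cmp C ?p2 f" "cmp C ?p2 g"] A B f g by auto
  then show "icmp ?P f g \<in> hom C J (C1 ?P)"
    by (simp add: iprod_def hom_iff)
qed (use A B in \<open>simp_all add: iprod_def hom_iff\<close>)

lemma ipow_typed: "icat_typed C A \<Longrightarrow> icat_typed C (ipow C n A)"
  by (induction n) (auto simp: iterm_typed iprod_typed)

lemma ifun_typed_simps [simp]:
  "ifun_typed C A B F \<Longrightarrow> fo F \<in> arr C" "ifun_typed C A B F \<Longrightarrow> dm C (fo F) = C0 A"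
  "ifun_typed C A B F \<Longrightarrow> cd C (fo F) = C0 B"
  "ifun_typed C A B F \<Longrightarrow> fa F \<in> arr C" "ifun_typed C A B F \<Longrightarrow> dm C (fa F) = C1 A"
  "ifun_typed C A B F \<Longrightarrow> cd C (fa F) = C1 B"
  unfolding ifun_typed_def hom_iff by auto

lemma internal_functor_typed: "internal_functor C A B F \<Longrightarrow> ifun_typed C A B F"
  unfolding internal_functor_def ifun_typed_def by blast

lemma fpow_typed:
  assumes A: "icat_typed C A" and B: "icat_typed C B" and F: "ifun_typed C A B F"
  shows "ifun_typed C (ipow C n A) (ipow C n B) (fpow C n A F)"
proof (induction n)
  case 0
  show ?case by (simp add: ifun_typed_def hom_iff fid_def iterm_def)
next
  case (Suc n)
  have "C0 (ipow C n A) \<in> obj C" "C1 (ipow C n A) \<in> obj C"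
    using ipow_typed[OF A] by simp_all
  then show ?case
    using Suc A B F unfolding ifun_typed_def[of C "ipow C (Suc n) A"]
    by (simp add: hom_iff fprod_def iprod_def)
qed

lemma internal_cat_icmp:
  assumes A: "internal_cat C A" and f: "f \<in> arr C" "cd C f = C1 A"
    and g: "g \<in> arr C" "cd C g = C1 A" "dm C g = dm C f" and fg: "cmp C (src A) f = cmp C (tgt A) g"
  shows "icmp A f g \<in> arr C" "dm C (icmp A f g) = dm C f" "cd C (icmp A f g) = C1 A"
    "cmp C (src A) (icmp A f g) = cmp C (src A) g" "cmp C (tgt A) (icmp A f g) = cmp C (tgt A) f"
    and "\<And>h. h \<in> arr C \<Longrightarrow> cd C h = dm C f \<Longrightarrow> cmp C (icmp A f g) h = icmp A (cmp C f h) (cmp C g h)"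
proof -
  have "composable C A (dm C f) f g" using f g fg unfolding composable_def hom_iff by auto
  then have props: "icmp A f g \<in> hom C (dm C f) (C1 A) \<and>
      cmp C (src A) (icmp A f g) = cmp C (src A) g \<and> cmp C (tgt A) (icmp A f g) = cmp C (tgt A) f \<and>
      (\<forall>K\<in>obj C. \<forall>h\<in>hom C K (dm C f). cmp C (icmp A f g) h = icmp A (cmp C f h) (cmp C g h))"
    using A dm_obj[OF f(1)] unfolding internal_cat_def by blast
  then show "icmp A f g \<in> arr C" "dm C (icmp A f g) = dm C f" "cd C (icmp A f g) = C1 A"
    "cmp C (src A) (icmp A f g) = cmp C (src A) g" "cmp C (tgt A) (icmp A f g) = cmp C (tgt A) f"
    by (auto simp: hom_iff)
  fix h assume "h \<in> arr C" "cd C h = dm C f"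
  then have "h \<in> hom C (dm C h) (dm C f)" "dm C h \<in> obj C" by (auto simp: hom_iff)
  then show "cmp C (icmp A f g) h = icmp A (cmp C f h) (cmp C g h)"
    using props by blast
qed

lemma icmp_unit_right:
  "internal_cat C A \<Longrightarrow> f \<in> arr C \<Longrightarrow> cd C f = C1 A \<Longrightarrow> icmp A f (cmp C (iid A) (cmp C (src A) f)) = f"
  and icmp_unit_left:
  "internal_cat C A \<Longrightarrow> f \<in> arr C \<Longrightarrow> cd C f = C1 A \<Longrightarrow> icmp A (cmp C (iid A) (cmp C (tgt A) f)) f = f"
proof -
  assume "internal_cat C A" "f \<in> arr C" "cd C f = C1 A"
  moreover have "f \<in> hom C (dm C f) (C1 A)" "dm C f \<in> obj C"
    using calculation by (auto simp: hom_iff)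
  ultimately show "icmp A f (cmp C (iid A) (cmp C (src A) f)) = f"
    and "icmp A (cmp C (iid A) (cmp C (tgt A) f)) f = f"
    unfolding internal_cat_def by blast+
qed

lemma src_iid_cmp [simp]:
  "internal_cat C A \<Longrightarrow> x \<in> arr C \<Longrightarrow> cd C x = C0 A \<Longrightarrow> cmp C (src A) (cmp C (iid A) x) = x"
  and tgt_iid_cmp [simp]:
  "internal_cat C A \<Longrightarrow> x \<in> arr C \<Longrightarrow> cd C x = C0 A \<Longrightarrow> cmp C (tgt A) (cmp C (iid A) x) = x"
proof -
  assume A: "internal_cat C A" and x: "x \<in> arr C" "cd C x = C0 A"
  have "cmp C (src A) (iid A) = idt C (C0 A)" "cmp C (tgt A) (iid A) = idt C (C0 A)"
    using A unfolding internal_cat_def by blast+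
  moreover have "icat_typed C A" using A by (rule internal_cat_typed)
  ultimately show "cmp C (src A) (cmp C (iid A) x) = x" "cmp C (tgt A) (cmp C (iid A) x) = x"
    using x by (simp_all flip: cmp_assoc)
qed

lemma internal_functor_laws:
  assumes F: "internal_functor C A B F" and A: "icat_typed C A" and B: "icat_typed C B"
    and x: "x \<in> arr C"
  shows "cd C x = C1 A \<Longrightarrow> cmp C (src B) (cmp C (fa F) x) = cmp C (fo F) (cmp C (src A) x)"
    and "cd C x = C1 A \<Longrightarrow> cmp C (tgt B) (cmp C (fa F) x) = cmp C (fo F) (cmp C (tgt A) x)"
    and "cd C x = C0 A \<Longrightarrow> cmp C (fa F) (cmp C (iid A) x) = cmp C (iid B) (cmp C (fo F) x)"
proof -
  have "ifun_typed C A B F" using F by (rule internal_functor_typed)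
  moreover have "cmp C (src B) (fa F) = cmp C (fo F) (src A)" "cmp C (tgt B) (fa F) = cmp C (fo F) (tgt A)"
    "cmp C (fa F) (iid A) = cmp C (iid B) (fo F)"
    using F unfolding internal_functor_def by blast+
  ultimately show "cd C x = C1 A \<Longrightarrow> cmp C (src B) (cmp C (fa F) x) = cmp C (fo F) (cmp C (src A) x)"
    and "cd C x = C1 A \<Longrightarrow> cmp C (tgt B) (cmp C (fa F) x) = cmp C (fo F) (cmp C (tgt A) x)"
    and "cd C x = C0 A \<Longrightarrow> cmp C (fa F) (cmp C (iid A) x) = cmp C (iid B) (cmp C (fo F) x)"
    using A B x by (simp_all flip: cmp_assoc)
qed

lemma fcomp_eq_cmp:
  assumes eq: "fcomp C G F = fcomp C G' F'"
    and typed: "ifun_typed C A B F" "ifun_typed C B D G" "ifun_typed C A B' F'" "ifun_typed C B' D G'"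
    and x: "x \<in> arr C"
  shows "cd C x = C0 A \<Longrightarrow> cmp C (fo G) (cmp C (fo F) x) = cmp C (fo G') (cmp C (fo F') x)"
    and "cd C x = C1 A \<Longrightarrow> cmp C (fa G) (cmp C (fa F) x) = cmp C (fa G') (cmp C (fa F') x)"
proof -
  have "cmp C (fo G) (fo F) = cmp C (fo G') (fo F')" "cmp C (fa G) (fa F) = cmp C (fa G') (fa F')"
    using arg_cong[OF eq, of fo] arg_cong[OF eq, of fa] by simp_all
  then show "cd C x = C0 A \<Longrightarrow> cmp C (fo G) (cmp C (fo F) x) = cmp C (fo G') (cmp C (fo F') x)"
    and "cd C x = C1 A \<Longrightarrow> cmp C (fa G) (cmp C (fa F) x) = cmp C (fa G') (cmp C (fa F') x)"
    using typed x by (simp_all flip: cmp_assoc)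
qed

lemma fcomp_eq_fid_cmp:
  assumes eq: "fcomp C G F = fid C A" and A: "icat_typed C A"
    and typed: "ifun_typed C A B F" "ifun_typed C B A G" and x: "x \<in> arr C"
  shows "cd C x = C0 A \<Longrightarrow> cmp C (fo G) (cmp C (fo F) x) = x"
    and "cd C x = C1 A \<Longrightarrow> cmp C (fa G) (cmp C (fa F) x) = x"
proof -
  have "cmp C (fo G) (fo F) = idt C (C0 A)" "cmp C (fa G) (fa F) = idt C (C1 A)"
    using arg_cong[OF eq, of fo] arg_cong[OF eq, of fa] by (simp_all add: fid_def)
  then show "cd C x = C0 A \<Longrightarrow> cmp C (fo G) (cmp C (fo F) x) = x"
    and "cd C x = C1 A \<Longrightarrow> cmp C (fa G) (cmp C (fa F) x) = x"
    using A typed x by (simp_all flip: cmp_assoc)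
qed

lemma internal_functor_fcomp:
  assumes F: "internal_functor C A B F" and G: "internal_functor C B D G"
    and A: "icat_typed C A" and B: "icat_typed C B" and D: "icat_typed C D"
  shows "internal_functor C A D (fcomp C G F)"
proof -
  note [simp] = ifun_typed_simps[OF internal_functor_typed[OF F]]
    ifun_typed_simps[OF internal_functor_typed[OF G]]
    internal_functor_laws[OF F A B] internal_functor_laws[OF G B D]
  have "cmp C (fa G) (cmp C (fa F) (icmp A f g)) =
      icmp D (cmp C (fa G) (cmp C (fa F) f)) (cmp C (fa G) (cmp C (fa F) g))"
    if J: "J \<in> obj C" and fg: "composable C A J f g" for J f g
  proof -
    have "composable C B J (cmp C (fa F) f) (cmp C (fa F) g)"
      using fg A B unfolding composable_def hom_iff by auto
    then have "cmp C (fa G) (icmp B (cmp C (fa F) f) (cmp C (fa F) g)) =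
        icmp D (cmp C (fa G) (cmp C (fa F) f)) (cmp C (fa G) (cmp C (fa F) g))"
      using G J unfolding internal_functor_def by blast
    moreover have "cmp C (fa F) (icmp A f g) = icmp B (cmp C (fa F) f) (cmp C (fa F) g)"
      using F J fg unfolding internal_functor_def by blast
    ultimately show ?thesis by simp
  qed
  moreover have "icmp A f g \<in> hom C J (C1 A)" if "J \<in> obj C" "composable C A J f g" for J f g
    using A that unfolding icat_typed_def by blast
  moreover have "cmp C (src B) (fa F) = cmp C (fo F) (src A)" "cmp C (tgt B) (fa F) = cmp C (fo F) (tgt A)"
    "cmp C (fa F) (iid A) = cmp C (iid B) (fo F)"
    using F unfolding internal_functor_def by blast+
  ultimately show ?thesis
    using A B D unfolding internal_functor_def
    by (auto simp: hom_iff composable_def)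
qed

lemma internal_functor_const:
  assumes P: "icat_typed C P" and B: "internal_cat C B"
    and u: "u \<in> arr C" "dm C u = tm C" "cd C u = C0 B"
  shows "internal_functor C P B (const_ifun C P B u)"
proof -
  have lB: "icat_typed C B" using B by (rule internal_cat_typed)
  have "cmp C (cmp C (iid B) (cmp C u (bng C (C1 P)))) (icmp P f g) =
      icmp B (cmp C (cmp C (iid B) (cmp C u (bng C (C1 P)))) f)
        (cmp C (cmp C (iid B) (cmp C u (bng C (C1 P)))) g)"
    if J: "J \<in> obj C" and fg: "composable C P J f g" for J f g
  proof -
    have "f \<in> arr C" "dm C f = J" "cd C f = C1 P" "g \<in> arr C" "dm C g = J" "cd C g = C1 P"
      using fg unfolding composable_def hom_iff by auto
    moreover have "icmp P f g \<in> hom C J (C1 P)" using P J fg unfolding icat_typed_def by blast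
    moreover define k where "k = cmp C (iid B) (cmp C u (bng C J))"
    moreover have "k \<in> arr C" "cd C k = C1 B" using lB u J by (auto simp: k_def)
    then have "icmp B k k = k"
      using icmp_unit_right[OF B, of k] B lB u J by (simp add: k_def)
    ultimately show ?thesis using lB u P by (simp add: hom_iff k_def)
  qed
  then show ?thesis unfolding internal_functor_def const_ifun_def
    using lB u P B by (simp add: hom_iff)
qed

lemma fcomp_const_ifun:
  assumes G: "internal_functor C A B G" and P: "icat_typed C P" and A: "icat_typed C A"
    and B: "icat_typed C B" and u: "u \<in> arr C" "dm C u = tm C" "cd C u = C0 A"
  shows "fcomp C G (const_ifun C P A u) = const_ifun C P B (cmp C (fo G) u)"
  using ifun_typed_simps[OF internal_functor_typed[OF G]] internal_functor_laws[OF G A B] P A B u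
  by (simp add: fcomp_def const_ifun_def)

lemma const_ifun_fcomp:
  assumes H: "ifun_typed C P Q H" and P: "icat_typed C P" and Q: "icat_typed C Q"
    and B: "icat_typed C B" and u: "u \<in> arr C" "dm C u = tm C" "cd C u = C0 B"
  shows "fcomp C (const_ifun C Q B u) H = const_ifun C P B u"
  using ifun_typed_simps[OF H] P Q B u by (simp add: fcomp_def const_ifun_def)

lemma internal_nat_const:
  assumes P: "icat_typed C P" and B: "internal_cat C B"
    and k: "k \<in> arr C" "dm C k = tm C" "cd C k = C1 B"
  shows "internal_nat C P B (const_ifun C P B (cmp C (src B) k)) (const_ifun C P B (cmp C (tgt B) k))
    (cmp C k (bng C (C0 P)))"
proof -
  have lB: "icat_typed C B" using B by (rule internal_cat_typed)
  have "icmp B (cmp C k (bng C (dm C f))) (cmp C (iid B) (cmp C (src B) (cmp C k (bng C (dm C f))))) =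
      icmp B (cmp C (iid B) (cmp C (tgt B) (cmp C k (bng C (dm C f))))) (cmp C k (bng C (dm C f)))"
    if "f \<in> arr C" for f
    using icmp_unit_right[OF B] icmp_unit_left[OF B] k lB that by simp
  then show ?thesis
    unfolding internal_nat_def const_ifun_def using P lB k by (auto simp: hom_iff)
qed

lemma internal_nat_iso_const:
  assumes P: "icat_typed C P" and B: "internal_cat C B" and grpd: "igroupoid C B"
    and k: "k \<in> arr C" "dm C k = tm C" "cd C k = C1 B"
  shows "internal_nat_iso C P B (const_ifun C P B (cmp C (src B) k)) (const_ifun C P B (cmp C (tgt B) k))
    (cmp C k (bng C (C0 P)))"
proof -
  have lB: "icat_typed C B" using B by (rule internal_cat_typed)
  have "k \<in> hom C (tm C) (C1 B)" using k by (simp add: hom_iff)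
  then obtain g where "g \<in> hom C (tm C) (C1 B)"
    and g: "cmp C (src B) g = cmp C (tgt B) k" "cmp C (tgt B) g = cmp C (src B) k"
    "icmp B g k = cmp C (iid B) (cmp C (src B) k)" "icmp B k g = cmp C (iid B) (cmp C (tgt B) k)"
    using grpd tm_obj unfolding igroupoid_def by blast
  then have g_arr: "g \<in> arr C" "dm C g = tm C" "cd C g = C1 B" by (simp_all add: hom_iff)
  let ?b = "bng C (C0 P)"
  have "cmp C (icmp B g k) ?b = icmp B (cmp C g ?b) (cmp C k ?b)"
    and "cmp C (icmp B k g) ?b = icmp B (cmp C k ?b) (cmp C g ?b)"
    by (rule internal_cat_icmp(6)[OF B]; use g g_arr k P lB in simp)+
  then have "icmp B (cmp C g ?b) (cmp C k ?b) = cmp C (iid B) (fo (const_ifun C P B (cmp C (src B) k)))"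
    and "icmp B (cmp C k ?b) (cmp C g ?b) = cmp C (iid B) (fo (const_ifun C P B (cmp C (tgt B) k)))"
    using g(3,4) g_arr k P lB by (simp_all add: const_ifun_def)
  moreover have "internal_nat C P B (const_ifun C P B (cmp C (tgt B) k)) (const_ifun C P B (cmp C (src B) k))
      (cmp C g ?b)"
    using internal_nat_const[OF P B g_arr] g(1,2) by simp
  ultimately show ?thesis
    unfolding internal_nat_iso_def using internal_nat_const[OF P B k] by blast
qed

section \<open>Terminal objects of internal categories\<close>

lemma iterminal_point:
  "iterminal C A t \<Longrightarrow> t \<in> arr C" "iterminal C A t \<Longrightarrow> dm C t = tm C"
  "iterminal C A t \<Longrightarrow> cd C t = C0 A"
  unfolding iterminal_def hom_iff by auto

lemma iterminal_arrow_eqI: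
  assumes t: "iterminal C A t" and A: "icat_typed C A"
    and m: "m \<in> arr C" "m' \<in> arr C" "cd C m = C1 A" "cd C m' = C1 A" "dm C m' = dm C m"
    and src: "cmp C (src A) m' = cmp C (src A) m"
    and tgt: "cmp C (tgt A) m = cmp C t (bng C (dm C m))" "cmp C (tgt A) m' = cmp C t (bng C (dm C m))"
  shows "m = m'"
proof -
  have "cmp C (src A) m \<in> hom C (dm C m) (C0 A)" using A m by (simp add: hom_iff)
  then have "\<exists>!n. n \<in> hom C (dm C m) (C1 A) \<and> cmp C (src A) n = cmp C (src A) m \<and>
      cmp C (tgt A) n = cmp C t (bng C (dm C m))"
    using t m(1) unfolding iterminal_def by simp
  moreover have "m \<in> hom C (dm C m) (C1 A)" "m' \<in> hom C (dm C m) (C1 A)"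
    using m by (auto simp: hom_iff)
  ultimately show ?thesis using src tgt by blast
qed

lemma ibang:
  assumes t: "iterminal C A t" and A: "icat_typed C A" and a: "a \<in> arr C" "cd C a = C0 A"
  shows "ibang C A t a \<in> arr C" "dm C (ibang C A t a) = dm C a" "cd C (ibang C A t a) = C1 A"
    and "cmp C (src A) (ibang C A t a) = a" "cmp C (tgt A) (ibang C A t a) = cmp C t (bng C (dm C a))"
proof -
  have "a \<in> hom C (dm C a) (C0 A)" using a by (simp add: hom_iff)
  then have "\<exists>!m. m \<in> hom C (dm C a) (C1 A) \<and> cmp C (src A) m = a \<and>
      cmp C (tgt A) m = cmp C t (bng C (dm C a))"
    using t a(1) unfolding iterminal_def by simp
  then have "ibang C A t a \<in> hom C (dm C a) (C1 A) \<and> cmp C (src A) (ibang C A t a) = a \<and>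
      cmp C (tgt A) (ibang C A t a) = cmp C t (bng C (dm C a))"
    unfolding ibang_def by (rule theI')
  then show "ibang C A t a \<in> arr C" "dm C (ibang C A t a) = dm C a" "cd C (ibang C A t a) = C1 A"
    and "cmp C (src A) (ibang C A t a) = a" "cmp C (tgt A) (ibang C A t a) = cmp C t (bng C (dm C a))"
    by (auto simp: hom_iff)
qed

lemma iterminal_icmp_eqI:
  assumes A: "internal_cat C A" and t: "iterminal C A t"
    and arr: "f \<in> arr C" "g \<in> arr C" "f' \<in> arr C" "g' \<in> arr C"
    and cd: "cd C f = C1 A" "cd C g = C1 A" "cd C f' = C1 A" "cd C g' = C1 A"
    and dm: "dm C g = dm C f" "dm C f' = dm C f" "dm C g' = dm C f"
    and composable: "cmp C (src A) f = cmp C (tgt A) g" "cmp C (src A) f' = cmp C (tgt A) g'"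
    and src: "cmp C (src A) g' = cmp C (src A) g"
    and tgt: "cmp C (tgt A) f = cmp C t (bng C (dm C f))" "cmp C (tgt A) f' = cmp C t (bng C (dm C f))"
  shows "icmp A f g = icmp A f' g'"
proof -
  have "dm C g' = dm C f'" using dm by simp
  note l = internal_cat_icmp(1-5)[OF A arr(1) cd(1) arr(2) cd(2) dm(1) composable(1)]
    and r = internal_cat_icmp(1-5)[OF A arr(3) cd(3) arr(4) cd(4) this composable(2)]
  show ?thesis
    by (rule iterminal_arrow_eqI[OF t internal_cat_typed[OF A]]) (simp_all add: l r dm src tgt)
qed

lemma internal_nat_ibang:
  assumes A: "internal_cat C A" and t: "iterminal C A t" and P: "icat_typed C P"
    and F: "internal_functor C P A F"
  shows "internal_nat C P A F (const_ifun C P A t) (ibang C A t (fo F))"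
proof -
  have lA: "icat_typed C A" using A by (rule internal_cat_typed)
  note [simp] = iterminal_point[OF t] ifun_typed_simps[OF internal_functor_typed[OF F]]
    internal_functor_laws[OF F P lA]
  let ?e = "ibang C A t (fo F)"
  have e [simp]: "?e \<in> arr C" "dm C ?e = C0 P" "cd C ?e = C1 A"
    "cmp C (src A) ?e = fo F" "cmp C (tgt A) ?e = cmp C t (bng C (C0 P))"
    using ibang[OF t lA, of "fo F"] P by simp_all
  have [simp]: "cmp C (src A) (cmp C ?e x) = cmp C (fo F) x"
    "cmp C (tgt A) (cmp C ?e x) = cmp C t (bng C (dm C x))" if "x \<in> arr C" "cd C x = C0 P" for x
    using cmp_reduce[OF e(4)] cmp_reduce[OF e(5)] that lA P by simp_all
  have "icmp A (cmp C ?e (cmp C (tgt P) f)) (cmp C (fa F) f) =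
      icmp A (cmp C (fa (const_ifun C P A t)) f) (cmp C ?e (cmp C (src P) f))"
    if f: "f \<in> arr C" "cd C f = C1 P" for f
  proof -
    have "cmp C (fa (const_ifun C P A t)) f = cmp C (iid A) (cmp C t (bng C (dm C f)))"
      using f P lA by (simp add: const_ifun_def)
    moreover have "icmp A (cmp C ?e (cmp C (tgt P) f)) (cmp C (fa F) f) =
        icmp A (cmp C (iid A) (cmp C t (bng C (dm C f)))) (cmp C ?e (cmp C (src P) f))"
      by (rule iterminal_icmp_eqI[OF A t]) (use f P A lA in simp_all)
    ultimately show ?thesis by simp
  qed
  then show ?thesis
    unfolding internal_nat_def using P by (simp add: hom_iff const_ifun_def[of C P A t])
qed

lemma internal_nat_to_terminal_iff:
  assumes A: "internal_cat C A" and t: "iterminal C A t" and P: "icat_typed C P"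
    and F: "internal_functor C P A F"
  shows "internal_nat C P A F (const_ifun C P A t) \<eta> \<longleftrightarrow> \<eta> = ibang C A t (fo F)"
proof
  assume "internal_nat C P A F (const_ifun C P A t) \<eta>"
  then have \<eta>: "\<eta> \<in> arr C" "dm C \<eta> = C0 P" "cd C \<eta> = C1 A" "cmp C (src A) \<eta> = fo F"
    "cmp C (tgt A) \<eta> = cmp C t (bng C (C0 P))"
    unfolding internal_nat_def by (simp_all add: hom_iff const_ifun_def)
  have lA: "icat_typed C A" using A by (rule internal_cat_typed)
  show "\<eta> = ibang C A t (fo F)"
    by (rule iterminal_arrow_eqI[OF t lA])
      (simp_all add: ibang[OF t lA] \<eta> ifun_typed_simps[OF internal_functor_typed[OF F]])
qed (use internal_nat_ibang[OF assms] in simp)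

end

section \<open>The terminal object of \<open>M\<^sup>n \<rightarrow> M\<close>\<close>

text \<open>\<open>eta1\<close> is the lift to \<open>M(1)\<close> of the canonical morphism \<open>\<eta>\<^sup>1\<close> of \<open>X(1)\<close>.\<close>

locale rgc_iso_with_terminals = cartesian_category C for C :: "('o,'m) pcat" +
  fixes X M :: "('o,'m) rgc" and I :: "'m rgf" and t0 t1 eta1 :: 'm
  assumes rgc_iso: "rgc_iso C X M I"
    and terminal0: "iterminal C (X0 X) t0" and terminal1: "iterminal C (X1 X) t1"
    and fT_t1: "cmp C (fo (fT X)) t1 = t0" and fB_t1: "cmp C (fo (fB X)) t1 = t0"
    and eta1: "eta1 \<in> hom C (tm C) (C1 (X1 M))"
    and I1_eta1: "cmp C (fa (F1 I)) eta1 = ibang C (X1 X) t1 (cmp C (fo (dg X)) t0)"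
begin

lemma reflexive_graph_X: "reflexive_graph_cat C X" and reflexive_graph_M: "reflexive_graph_cat C M"
  using rgc_iso unfolding rgc_iso_def by blast+

lemma internal_cat_X0: "internal_cat C (X0 X)" and internal_cat_X1: "internal_cat C (X1 X)"
  and internal_cat_M0: "internal_cat C (X0 M)" and internal_cat_M1: "internal_cat C (X1 M)"
  using reflexive_graph_X reflexive_graph_M unfolding reflexive_graph_cat_def by blast+

lemma typed_X0 [simp]: "icat_typed C (X0 X)" and typed_X1 [simp]: "icat_typed C (X1 X)"
  and typed_M0 [simp]: "icat_typed C (X0 M)" and typed_M1 [simp]: "icat_typed C (X1 M)"
  using internal_cat_X0 internal_cat_X1 internal_cat_M0 internal_cat_M1 internal_cat_typed by blast+

lemma typed_M0_pow [simp]: "icat_typed C (ipow C n (X0 M))"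
  and typed_M1_pow [simp]: "icat_typed C (ipow C n (X1 M))"
  by (simp_all add: ipow_typed)

lemma functor_fT_X: "internal_functor C (X1 X) (X0 X) (fT X)"
  and functor_fB_X: "internal_functor C (X1 X) (X0 X) (fB X)"
  and functor_dg_X: "internal_functor C (X0 X) (X1 X) (dg X)"
  and functor_fT_M: "internal_functor C (X1 M) (X0 M) (fT M)"
  and functor_fB_M: "internal_functor C (X1 M) (X0 M) (fB M)"
  and functor_dg_M: "internal_functor C (X0 M) (X1 M) (dg M)"
  using reflexive_graph_X reflexive_graph_M unfolding reflexive_graph_cat_def by blast+

lemma functor_I0: "internal_functor C (X0 M) (X0 X) (F0 I)"
  and functor_I1: "internal_functor C (X1 M) (X1 X) (F1 I)"
  using rgc_iso unfolding rgc_iso_def rg_functor_def by blast+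

lemmas typed_fT_X = internal_functor_typed[OF functor_fT_X]
  and typed_fB_X = internal_functor_typed[OF functor_fB_X]
  and typed_dg_X = internal_functor_typed[OF functor_dg_X]
  and typed_fT_M = internal_functor_typed[OF functor_fT_M]
  and typed_fB_M = internal_functor_typed[OF functor_fB_M]
  and typed_dg_M = internal_functor_typed[OF functor_dg_M]
  and typed_I0 = internal_functor_typed[OF functor_I0]
  and typed_I1 = internal_functor_typed[OF functor_I1]

lemmas typed_functor_simps [simp] =
  ifun_typed_simps[OF typed_fT_X] ifun_typed_simps[OF typed_fB_X] ifun_typed_simps[OF typed_dg_X]
  ifun_typed_simps[OF typed_fT_M] ifun_typed_simps[OF typed_fB_M] ifun_typed_simps[OF typed_dg_M]
  ifun_typed_simps[OF typed_I0] ifun_typed_simps[OF typed_I1]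

lemmas functor_laws [simp] =
  internal_functor_laws[OF functor_fT_X typed_X1 typed_X0]
  internal_functor_laws[OF functor_fB_X typed_X1 typed_X0]
  internal_functor_laws[OF functor_dg_X typed_X0 typed_X1]
  internal_functor_laws[OF functor_fT_M typed_M1 typed_M0]
  internal_functor_laws[OF functor_fB_M typed_M1 typed_M0]
  internal_functor_laws[OF functor_dg_M typed_M0 typed_M1]
  internal_functor_laws[OF functor_I0 typed_M0 typed_X0]
  internal_functor_laws[OF functor_I1 typed_M1 typed_X1]

lemma iso_I0: "iso_in C (fo (F0 I))" and iso_I1: "iso_in C (fo (F1 I))"
  and mono_I0: "mono_in C (fa (F0 I))"
  using rgc_iso unfolding rgc_iso_def by blast+

lemma I_face_deg:
  "fcomp C (F0 I) (fT M) = fcomp C (fT X) (F1 I)" "fcomp C (F0 I) (fB M) = fcomp C (fB X) (F1 I)"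
  "fcomp C (F1 I) (dg M) = fcomp C (dg X) (F0 I)"
  using rgc_iso unfolding rgc_iso_def by blast+

lemma eps_I: "eps I = cmp C (iid (X1 X)) (cmp C (fo (dg X)) (fo (F0 I)))"
  and groupoid_M1: "igroupoid C (X1 M)"
  using rgc_iso unfolding rgc_iso_def by blast+

lemma face_dg_X: "fcomp C (fT X) (dg X) = fid C (X0 X)" "fcomp C (fB X) (dg X) = fid C (X0 X)"
  and face_dg_M: "fcomp C (fT M) (dg M) = fid C (X0 M)" "fcomp C (fB M) (dg M) = fid C (X0 M)"
  using reflexive_graph_X reflexive_graph_M unfolding reflexive_graph_cat_def by blast+

lemmas I_face_deg_cmp [simp] =
  fcomp_eq_cmp[OF I_face_deg(1) typed_fT_M typed_I0 typed_I1 typed_fT_X]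
  fcomp_eq_cmp[OF I_face_deg(2) typed_fB_M typed_I0 typed_I1 typed_fB_X]
  fcomp_eq_cmp[OF I_face_deg(3) typed_dg_M typed_I1 typed_I0 typed_dg_X]

lemmas face_dg_cmp [simp] =
  fcomp_eq_fid_cmp[OF face_dg_X(1) typed_X0 typed_dg_X typed_fT_X]
  fcomp_eq_fid_cmp[OF face_dg_X(2) typed_X0 typed_dg_X typed_fB_X]
  fcomp_eq_fid_cmp[OF face_dg_M(1) typed_M0 typed_dg_M typed_fT_M]
  fcomp_eq_fid_cmp[OF face_dg_M(2) typed_M0 typed_dg_M typed_fB_M]

lemmas terminal_points [simp] = iterminal_point[OF terminal0] iterminal_point[OF terminal1]

lemma eta1_arr [simp]: "eta1 \<in> arr C" "dm C eta1 = tm C" "cd C eta1 = C1 (X1 M)"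
  using eta1 by (simp_all add: hom_iff)

abbreviation eta1_X :: 'm where
  "eta1_X \<equiv> ibang C (X1 X) t1 (cmp C (fo (dg X)) t0)"

lemma eta1_X [simp]: "eta1_X \<in> arr C" "dm C eta1_X = tm C" "cd C eta1_X = C1 (X1 X)"
  "cmp C (src (X1 X)) eta1_X = cmp C (fo (dg X)) t0" "cmp C (tgt (X1 X)) eta1_X = t1"
  using ibang[OF terminal1 typed_X1, of "cmp C (fo (dg X)) t0"] by simp_all

lemmas eta1_X_cmp [simp] = cmp_reduce[OF eta1_X(4)] cmp_reduce[OF eta1_X(5)]

lemma face_eta1_X [simp]:
  "cmp C (fa (fT X)) eta1_X = cmp C (iid (X0 X)) t0" "cmp C (fa (fB X)) eta1_X = cmp C (iid (X0 X)) t0"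
  by (rule iterminal_arrow_eqI[OF terminal0 typed_X0]; simp add: internal_cat_X0 fT_t1 fB_t1)+

lemmas face_t1_cmp [simp] = cmp_reduce[OF fT_t1] cmp_reduce[OF fB_t1]

definition u1 :: 'm where
  "u1 = cmp C (tgt (X1 M)) eta1"

definition u0 :: 'm where
  "u0 = cmp C (fo (fT M)) u1"

lemma u1_arr [simp]: "u1 \<in> arr C" "dm C u1 = tm C" "cd C u1 = C0 (X1 M)"
  and u0_arr [simp]: "u0 \<in> arr C" "dm C u0 = tm C" "cd C u0 = C0 (X0 M)"
  by (simp_all add: u1_def u0_def)

lemma I1_u1 [simp]: "cmp C (fo (F1 I)) u1 = t1"
proof -
  have "cmp C (fo (F1 I)) u1 = cmp C (tgt (X1 X)) (cmp C (fa (F1 I)) eta1)"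
    unfolding u1_def by simp
  then show ?thesis by (simp add: I1_eta1)
qed

lemma I0_u0 [simp]: "cmp C (fo (F0 I)) u0 = t0"
  unfolding u0_def by (simp add: fT_t1)

lemma fT_u1 [simp]: "cmp C (fo (fT M)) u1 = u0"
  by (simp add: u0_def)

lemma fB_u1 [simp]: "cmp C (fo (fB M)) u1 = u0"
  by (rule iso_in_cancel[OF iso_I0]) (simp_all add: fB_t1)

lemma src_eta1 [simp]: "cmp C (src (X1 M)) eta1 = cmp C (fo (dg M)) u0"
proof (rule iso_in_cancel[OF iso_I1])
  have "cmp C (fo (F1 I)) (cmp C (src (X1 M)) eta1) = cmp C (src (X1 X)) (cmp C (fa (F1 I)) eta1)"
    by simp
  then show "cmp C (fo (F1 I)) (cmp C (src (X1 M)) eta1) = cmp C (fo (F1 I)) (cmp C (fo (dg M)) u0)"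
    by (simp add: I1_eta1)
qed simp_all

lemma tgt_eta1 [simp]: "cmp C (tgt (X1 M)) eta1 = u1"
  by (simp add: u1_def)

lemma face_eta1 [simp]:
  "cmp C (fa (fT M)) eta1 = cmp C (iid (X0 M)) u0" "cmp C (fa (fB M)) eta1 = cmp C (iid (X0 M)) u0"
  by (rule mono_in_cancel[OF mono_I0]; simp add: I1_eta1)+

definition terminal_functor :: "nat \<Rightarrow> 'm rgf" where
  "terminal_functor n =
    \<lparr>F0 = const_ifun C (ipow C n (X0 M)) (X0 M) u0, F1 = const_ifun C (ipow C n (X1 M)) (X1 M) u1,
     eps = cmp C eta1 (bng C (C0 (ipow C n (X0 M))))\<rparr>"

lemma rgpow_simps [simp]:
  "X0 (rgpow C n M) = ipow C n (X0 M)" "X1 (rgpow C n M) = ipow C n (X1 M)"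
  "fT (rgpow C n M) = fpow C n (X1 M) (fT M)" "fB (rgpow C n M) = fpow C n (X1 M) (fB M)"
  "dg (rgpow C n M) = fpow C n (X0 M) (dg M)"
  by (simp_all add: rgpow_def)

lemma typed_fT_pow: "ifun_typed C (ipow C n (X1 M)) (ipow C n (X0 M)) (fpow C n (X1 M) (fT M))"
  and typed_fB_pow: "ifun_typed C (ipow C n (X1 M)) (ipow C n (X0 M)) (fpow C n (X1 M) (fB M))"
  and typed_dg_pow: "ifun_typed C (ipow C n (X0 M)) (ipow C n (X1 M)) (fpow C n (X0 M) (dg M))"
  by (simp_all add: fpow_typed typed_fT_M typed_fB_M typed_dg_M)

lemmas typed_pow_functor_simps [simp] =
  ifun_typed_simps[OF typed_fT_pow] ifun_typed_simps[OF typed_fB_pow] ifun_typed_simps[OF typed_dg_pow]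

lemma terminal_functor_face_pres: "face_pres C (rgpow C n M) M (terminal_functor n)"
proof -
  have "fcomp C (fT M) (const_ifun C (ipow C n (X1 M)) (X1 M) u1) =
      fcomp C (const_ifun C (ipow C n (X0 M)) (X0 M) u0) (fpow C n (X1 M) (fT M))"
    and "fcomp C (fB M) (const_ifun C (ipow C n (X1 M)) (X1 M) u1) =
      fcomp C (const_ifun C (ipow C n (X0 M)) (X0 M) u0) (fpow C n (X1 M) (fB M))"
    by (simp_all add: fcomp_const_ifun[OF functor_fT_M] fcomp_const_ifun[OF functor_fB_M]
        const_ifun_fcomp[OF typed_fT_pow] const_ifun_fcomp[OF typed_fB_pow])
  then show ?thesis
    unfolding face_pres_def terminal_functor_def by simp
qed

lemma terminal_functor_deg_pres: "deg_pres C (rgpow C n M) M (terminal_functor n)"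
proof -
  let ?P0 = "ipow C n (X0 M)" and ?P1 = "ipow C n (X1 M)"
  have "fcomp C (dg M) (const_ifun C ?P0 (X0 M) u0) = const_ifun C ?P0 (X1 M) (cmp C (src (X1 M)) eta1)"
    and "fcomp C (const_ifun C ?P1 (X1 M) u1) (fpow C n (X0 M) (dg M)) =
      const_ifun C ?P0 (X1 M) (cmp C (tgt (X1 M)) eta1)"
    by (simp_all add: fcomp_const_ifun[OF functor_dg_M] const_ifun_fcomp[OF typed_dg_pow])
  then have "internal_nat_iso C ?P0 (X1 M) (fcomp C (dg M) (F0 (terminal_functor n)))
      (fcomp C (F1 (terminal_functor n)) (fpow C n (X0 M) (dg M))) (eps (terminal_functor n))"
    using internal_nat_iso_const[OF typed_M0_pow internal_cat_M1 groupoid_M1 eta1_arr]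
    by (simp add: terminal_functor_def)
  moreover have "cmp C (fa (fT M)) (eps (terminal_functor n)) = cmp C (iid (X0 M)) (fo (F0 (terminal_functor n)))"
    and "cmp C (fa (fB M)) (eps (terminal_functor n)) = cmp C (iid (X0 M)) (fo (F0 (terminal_functor n)))"
    by (simp_all add: terminal_functor_def const_ifun_def cmp_reduce[OF face_eta1(1)]
        cmp_reduce[OF face_eta1(2)])
  ultimately show ?thesis
    unfolding deg_pres_def by simp
qed

lemma terminal_functor_obj: "MnM_obj C M n (terminal_functor n)"
  unfolding MnM_obj_def rg_functor_def
  using terminal_functor_face_pres terminal_functor_deg_pres
    internal_functor_const[OF typed_M0_pow internal_cat_M0 u0_arr]
    internal_functor_const[OF typed_M1_pow internal_cat_M1 u1_arr]
  by (simp add: terminal_functor_def)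

lemma rgf_comp_simps [simp]:
  "F0 (rgf_comp C X I G) = fcomp C (F0 I) (F0 G)" "F1 (rgf_comp C X I G) = fcomp C (F1 I) (F1 G)"
  by (simp_all add: rgf_comp_def)

lemma eps_rgf_comp:
  assumes G: "MnM_obj C M n G"
  shows "eps (rgf_comp C X I G) = cmp C (fa (F1 I)) (eps G)"
proof -
  have G0: "internal_functor C (ipow C n (X0 M)) (X0 M) (F0 G)"
    and "internal_nat C (ipow C n (X0 M)) (X1 M) (fcomp C (dg M) (F0 G))
      (fcomp C (F1 G) (fpow C n (X0 M) (dg M))) (eps G)"
    using G unfolding MnM_obj_def rg_functor_def deg_pres_def internal_nat_iso_def by auto
  then have [simp]: "eps G \<in> arr C" "dm C (eps G) = C0 (ipow C n (X0 M))" "cd C (eps G) = C1 (X1 M)"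
    "cmp C (src (X1 M)) (eps G) = cmp C (fo (dg M)) (fo (F0 G))"
    unfolding internal_nat_def by (auto simp: hom_iff)
  note [simp] = ifun_typed_simps[OF internal_functor_typed[OF G0]]
  have "cmp C (eps I) (fo (F0 G)) = cmp C (iid (X1 X)) (cmp C (src (X1 X)) (cmp C (fa (F1 I)) (eps G)))"
    by (simp add: eps_I)
  then show ?thesis
    using icmp_unit_right[OF internal_cat_X1, of "cmp C (fa (F1 I)) (eps G)"]
    by (simp add: rgf_comp_def)
qed

definition to_terminal :: "'m rgf \<Rightarrow> 'm rgn" where
  "to_terminal F = \<lparr>N0 = ibang C (X0 X) t0 (cmp C (fo (F0 I)) (fo (F0 F))),
     N1 = ibang C (X1 X) t1 (cmp C (fo (F1 I)) (fo (F1 F)))\<rparr>"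

context
  fixes n :: nat and F :: "'m rgf"
  assumes F: "MnM_obj C M n F"
begin

lemma functor_F0: "internal_functor C (ipow C n (X0 M)) (X0 M) (F0 F)"
  and functor_F1: "internal_functor C (ipow C n (X1 M)) (X1 M) (F1 F)"
  using F unfolding MnM_obj_def rg_functor_def by auto

lemmas typed_F_simps [simp] =
  ifun_typed_simps[OF internal_functor_typed[OF functor_F0]]
  ifun_typed_simps[OF internal_functor_typed[OF functor_F1]]

lemmas F_laws [simp] =
  internal_functor_laws[OF functor_F0 typed_M0_pow typed_M0]
  internal_functor_laws[OF functor_F1 typed_M1_pow typed_M1]

lemma F_face: "fcomp C (fT M) (F1 F) = fcomp C (F0 F) (fpow C n (X1 M) (fT M))"
  "fcomp C (fB M) (F1 F) = fcomp C (F0 F) (fpow C n (X1 M) (fB M))"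
  using F unfolding MnM_obj_def face_pres_def by auto

lemma F_face_fo [simp]:
  "cmp C (fo (F0 F)) (fo (fpow C n (X1 M) (fT M))) = cmp C (fo (fT M)) (fo (F1 F))"
  "cmp C (fo (F0 F)) (fo (fpow C n (X1 M) (fB M))) = cmp C (fo (fB M)) (fo (F1 F))"
  using arg_cong[OF F_face(1), of fo] arg_cong[OF F_face(2), of fo] by simp_all

lemma eps_F [simp]: "eps F \<in> arr C" "dm C (eps F) = C0 (ipow C n (X0 M))" "cd C (eps F) = C1 (X1 M)"
  "cmp C (src (X1 M)) (eps F) = cmp C (fo (dg M)) (fo (F0 F))"
  "cmp C (tgt (X1 M)) (eps F) = cmp C (fo (F1 F)) (fo (fpow C n (X0 M) (dg M)))"
  using F unfolding MnM_obj_def deg_pres_def internal_nat_iso_def internal_nat_def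
  by (auto simp: hom_iff)

lemma to_terminal_simps [simp]:
  "N0 (to_terminal F) \<in> arr C" "dm C (N0 (to_terminal F)) = C0 (ipow C n (X0 M))"
  "cd C (N0 (to_terminal F)) = C1 (X0 X)"
  "cmp C (src (X0 X)) (N0 (to_terminal F)) = cmp C (fo (F0 I)) (fo (F0 F))"
  "cmp C (tgt (X0 X)) (N0 (to_terminal F)) = cmp C t0 (bng C (C0 (ipow C n (X0 M))))"
  "N1 (to_terminal F) \<in> arr C" "dm C (N1 (to_terminal F)) = C0 (ipow C n (X1 M))"
  "cd C (N1 (to_terminal F)) = C1 (X1 X)"
  "cmp C (src (X1 X)) (N1 (to_terminal F)) = cmp C (fo (F1 I)) (fo (F1 F))"
  "cmp C (tgt (X1 X)) (N1 (to_terminal F)) = cmp C t1 (bng C (C0 (ipow C n (X1 M))))"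
  using ibang[OF terminal0 typed_X0, of "cmp C (fo (F0 I)) (fo (F0 F))"]
    ibang[OF terminal1 typed_X1, of "cmp C (fo (F1 I)) (fo (F1 F))"] F
  by (simp_all add: to_terminal_def)

lemmas to_terminal_cmp [simp] =
  cmp_reduce[OF to_terminal_simps(4)] cmp_reduce[OF to_terminal_simps(5)]
  cmp_reduce[OF to_terminal_simps(9)] cmp_reduce[OF to_terminal_simps(10)]

lemma rg_nat_terminal_iff:
  "rg_nat C (rgpow C n M) X (rgf_comp C X I F) (rgf_comp C X I (terminal_functor n)) \<eta> \<longleftrightarrow>
   \<eta> = to_terminal F"
proof -
  let ?P0 = "ipow C n (X0 M)" and ?P1 = "ipow C n (X1 M)"
  have "fcomp C (F0 I) (F0 (terminal_functor n)) = const_ifun C ?P0 (X0 X) t0"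
    and "fcomp C (F1 I) (F1 (terminal_functor n)) = const_ifun C ?P1 (X1 X) t1"
    by (simp_all add: terminal_functor_def fcomp_const_ifun[OF functor_I0] fcomp_const_ifun[OF functor_I1])
  moreover have "internal_functor C ?P0 (X0 X) (fcomp C (F0 I) (F0 F))"
    and "internal_functor C ?P1 (X1 X) (fcomp C (F1 I) (F1 F))"
    by (simp_all add: internal_functor_fcomp[OF functor_F0 functor_I0]
        internal_functor_fcomp[OF functor_F1 functor_I1])
  ultimately show ?thesis
    unfolding rg_nat_def rgpow_simps rgf_comp_simps
    using internal_nat_to_terminal_iff[OF internal_cat_X0 terminal0 typed_M0_pow]
      internal_nat_to_terminal_iff[OF internal_cat_X1 terminal1 typed_M1_pow]
    by (cases \<eta>) (simp add: to_terminal_def)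
qed

lemma to_terminal_face_pres: "rgn_face_pres C (rgpow C n M) X (to_terminal F)"
  unfolding rgn_face_pres_def rgpow_simps
  by (rule conjI; rule iterminal_arrow_eqI[OF terminal0 typed_X0]) (simp_all add: internal_cat_X0)

lemma to_terminal_deg_pres:
  "rgn_deg_pres C (rgpow C n M) X (rgf_comp C X I F) (rgf_comp C X I (terminal_functor n)) (to_terminal F)"
proof -
  let ?b = "bng C (C0 (ipow C n (X0 M)))"
  have "icmp (X1 X) (cmp C (N1 (to_terminal F)) (fo (fpow C n (X0 M) (dg M)))) (cmp C (fa (F1 I)) (eps F)) =
      icmp (X1 X) (cmp C eta1_X ?b) (cmp C (fa (dg X)) (N0 (to_terminal F)))"
    by (rule iterminal_icmp_eqI[OF internal_cat_X1 terminal1]) simp_all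
  then show ?thesis
    unfolding rgn_deg_pres_def rgpow_simps eps_rgf_comp[OF F] eps_rgf_comp[OF terminal_functor_obj]
    by (simp add: terminal_functor_def cmp_reduce[OF I1_eta1])
qed

lemma MnM_hom_terminal_iff: "MnM_hom C X M I n F (terminal_functor n) \<eta> \<longleftrightarrow> \<eta> = to_terminal F"
  unfolding MnM_hom_def using rg_nat_terminal_iff to_terminal_face_pres to_terminal_deg_pres by blast

end

end

theorem lemma41:
  fixes C :: "('o,'m) pcat" and X M :: "('o,'m) rgc" and I :: "'m rgf" and n :: nat
  assumes "category C" and "finite_products C"
    and "rgc_iso C X M I"
    and "terminal_stable C X M I"
  shows "\<exists>T. MnM_obj C M n T \<and> (\<forall>F. MnM_obj C M n F \<longrightarrow> (\<exists>!\<eta>. MnM_hom C X M I n F T \<eta>))"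
proof -
  obtain t0 t1 eta1 where "iterminal C (X0 X) t0" "iterminal C (X1 X) t1"
    "cmp C (fo (fT X)) t1 = t0" "cmp C (fo (fB X)) t1 = t0"
    "eta1 \<in> hom C (tm C) (C1 (X1 M))"
    "cmp C (fa (F1 I)) eta1 = ibang C (X1 X) t1 (cmp C (fo (dg X)) t0)"
    using assms(4) unfolding terminal_stable_def by blast
  then interpret rgc_iso_with_terminals C X M I t0 t1 eta1
    using assms(1-3) by (intro rgc_iso_with_terminals.intro rgc_iso_with_terminals_axioms.intro
        cartesian_category.intro)
  show ?thesis
  proof (intro exI conjI allI impI)
    show "MnM_obj C M n (terminal_functor n)" by (rule terminal_functor_obj)
  next
    fix F assume "MnM_obj C M n F"
    then show "\<exists>!\<eta>. MnM_hom C X M I n F (terminal_functor n) \<eta>"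
      by (simp add: MnM_hom_terminal_iff)
  qed
qed

end
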